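(* Let $S=\{x_1,\ldots,x_n\}$ be a factor-closed set of $n$ distinct positive integers. Let $m\ge1$, $\boldsymbol k=(k_1,\ldots,k_m)\in\mathbb{N}^m$, $|\boldsymbol k|:=k_1+\cdots+k_m$, and let $F(\boldsymbol r;\boldsymbol n_1,\ldots,\boldsymbol n_m)$ be even $\pmod{\boldsymbol r^{(\boldsymbol k)}}$. Define the $(m+|\boldsymbol k|)$-dimensional matrix $B$ of order $n$ by \[ B(i_1,\ldots,i_{m+|\boldsymbol k|}):=F\bigl(x_{i_1},\ldots,x_{i_m};\,\underbrace{x_{i_{m+1}},\ldots,x_{i_{m+k_1}}}_{k_1},\ldots,\underbrace{x_{i_{m+k_1+\cdots+k_{m-1}+1}},\ldots,x_{i_{m+|\boldsymbol k|}}}_{k_m}\bigr). \] Let $I\subseteq\{1,\ldots,m+|\boldsymbol k|\}$ have even cardinality and satisfy $\{m+1,\ldots,m+|\boldsymbol k|\}\subseteq I$; put $\varepsilon_j=1$ if $j\in I$ and $0$ otherwise, and let $\widetilde I:=\{j\in\{1,\ldots,m\}:\varepsilon_j+k_j\text{ is odd}\}$. Then \[ \det_IB=(x_1\cdots x_n)^{|\boldsymbol k|}\,\det_{\widetilde I}\Bigl(\alpha_{(x_{i_1},\ldots,x_{i_m})}\bigl(\underbrace{x_{i_1},\ldots,x_{i_1}}_{k_1},\ldots,\underbrace{x_{i_m},\ldots,x_{i_m}}_{k_m}\bigr)\Bigr)_{1\le i_1,\ldots,i_m\le n}. \]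
   Context: A set $S$ of positive integers is factor-closed if every positive divisor of every element of $S$ lies in $S$. $c(k,n):=\sum_{d\mid\gcd(k,n)}\mu(k/d)\,d$ is the Ramanujan sum. For $\boldsymbol r=(r_1,\ldots,r_m)\in\mathbb{N}^m$, variables are grouped as $\boldsymbol n_j\in\mathbb{N}^{k_j}$; for $\boldsymbol n=(n_1,\ldots,n_t)\in\mathbb{N}^t$ and $r\in\mathbb{N}$ write $\gcd(\boldsymbol n,r):=(\gcd(n_1,r),\ldots,\gcd(n_t,r))$, write $\boldsymbol n\mid r$ if $n_i\mid r$ for all $i$, and then $r/\boldsymbol n:=(r/n_1,\ldots,r/n_t)$; for $\boldsymbol a,\boldsymbol b\in\mathbb{N}^t$, $c(\boldsymbol a,\boldsymbol b):=\prod_{i=1}^tc(a_i,b_i)$. A family of functions $F(\boldsymbol r;\boldsymbol n_1,\ldots,\boldsymbol n_m)\in\mathbb{C}$, indexed by $\boldsymbol r\in\mathbb{N}^m$, of the $|\boldsymbol k|$ variables $\boldsymbol n_j\in\mathbb{N}^{k_j}$, is even $\pmod{\boldsymbol r^{(\boldsymbol k)}}$ if $F(\boldsymbol r;\gcd(\boldsymbol n_1,r_1),\ldots,\gcd(\boldsymbol n_m,r_m))=F(\boldsymbol r;\boldsymbol n_1,\ldots,\boldsymbol n_m)$ for all $\boldsymbol r$ and all arguments. Its finite Fourier coefficients are, for $\boldsymbol d_j\in\mathbb{N}^{k_j}$ with $\boldsymbol d_j\mid r_j$, \[ \alpha_{\boldsymbol r}(\boldsymbol d_1,\ldots,\boldsymbol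 d_m):=\frac{1}{r_1^{k_1}\cdots r_m^{k_m}}\sum_{\substack{\boldsymbol\delta_j\in\mathbb{N}^{k_j},\ \boldsymbol\delta_j\mid r_j\\ (j=1,\ldots,m)}}F(\boldsymbol r;\boldsymbol\delta_1,\ldots,\boldsymbol\delta_m)\prod_{j=1}^mc\Bigl(\frac{r_j}{\boldsymbol\delta_j},\frac{r_j}{\boldsymbol d_j}\Bigr). \] Hyperdeterminant: for a $K$-dimensional matrix $A$ of order $n$ and $J\subseteq\{1,\ldots,K\}$, with $\eta_j=1$ if $j\in J$ and $0$ otherwise, $\det_JA:=\frac{1}{n!}\sum_{\sigma_1,\ldots,\sigma_K\in\mathfrak{S}_n}\prod_{j=1}^K\mathrm{sgn}(\sigma_j)^{\eta_j}\prod_{v=1}^nA(\sigma_1(v),\ldots,\sigma_K(v))$, where $\mathfrak{S}_n$ is the symmetric group on $\{1,\ldots,n\}$. *)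

theory Defs
  imports "HOL-Analysis.Analysis" "HOL-Combinatorics.Permutations"
    "HOL-Computational_Algebra.Squarefree"
begin

definition moebius_mu :: "nat \<Rightarrow> int" where
  "moebius_mu n = (if n = 0 then 0 else if squarefree n then (-1) ^ card (prime_factors n) else 0)"

definition ramanujan_sum :: "nat \<Rightarrow> nat \<Rightarrow> int" where
  "ramanujan_sum k n = (\<Sum>d\<in>{d. d dvd gcd k n}. moebius_mu (k div d) * int d)"

definition factor_closed :: "nat set \<Rightarrow> bool" where
  "factor_closed S \<longleftrightarrow> (\<forall>s\<in>S. \<forall>d. d > 0 \<and> d dvd s \<longrightarrow> d \<in> S)"

definition shaped :: "nat list \<Rightarrow> 'a list list \<Rightarrow> bool" where
  "shaped k ns \<longleftrightarrow> length ns = length k \<and> (\<forall>j<length k. length (ns ! j) = k ! j)"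

(* F is even (mod r^(k)); F r ns with r = (r_1,...,r_m), ns = (n_1,...,n_m) *)
definition even_mod :: "nat list \<Rightarrow> (nat list \<Rightarrow> nat list list \<Rightarrow> complex) \<Rightarrow> bool" where
  "even_mod k F \<longleftrightarrow>
     (\<forall>r ns. length r = length k \<and> (\<forall>a\<in>set r. a > 0) \<and> shaped k ns \<and>
        (\<forall>g\<in>set ns. \<forall>a\<in>set g. a > 0) \<longrightarrow>
        F r (map2 (\<lambda>rj nj. map (\<lambda>a. gcd a rj) nj) r ns) = F r ns)"

definition fourier_coeff ::
  "nat list \<Rightarrow> (nat list \<Rightarrow> nat list list \<Rightarrow> complex) \<Rightarrow> nat list \<Rightarrow> nat list list \<Rightarrow> complex" where
  "fourier_coeff k F r ds =
     (1 / (\<Prod>j<length k. of_nat (r ! j) ^ (k ! j))) *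
     (\<Sum>\<delta>s\<in>{\<delta>s. shaped k \<delta>s \<and> (\<forall>j<length k. \<forall>l<k ! j. \<delta>s ! j ! l dvd r ! j)}.
        F r \<delta>s *
        (\<Prod>j<length k. \<Prod>l<k ! j.
           of_int (ramanujan_sum (r ! j div (\<delta>s ! j ! l)) (r ! j div (ds ! j ! l)))))"

(* hyperdeterminant det_J A of a K-dimensional matrix A of order n; indices 0-based:
   A takes index lists of length K with entries in {0..<n}, J \<subseteq> {0..<K} *)
definition hyperdet :: "nat \<Rightarrow> nat \<Rightarrow> nat set \<Rightarrow> (nat list \<Rightarrow> complex) \<Rightarrow> complex" where
  "hyperdet K n J A =
     (1 / of_nat (fact n)) *
     (\<Sum>\<sigma>s\<in>{\<sigma>s. length \<sigma>s = K \<and> (\<forall>\<sigma>\<in>set \<sigma>s. \<sigma> permutes {..<n})}.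
        (\<Prod>j<K. if j \<in> J then of_int (sign (\<sigma>s ! j)) else 1) *
        (\<Prod>v<n. A (map (\<lambda>\<sigma>. \<sigma> v) \<sigma>s)))"

fun group_by :: "nat list \<Rightarrow> 'a list \<Rightarrow> 'a list list" where
  "group_by [] xs = []"
| "group_by (k # ks) xs = take k xs # group_by ks (drop k xs)"

end

theory Submission
  imports Defs "Jordan_Normal_Form.Determinant"
begin

(* Fix the permutations rho_1, ..., rho_m of the first m coordinates in the expansion of det_I B.
   Since all of the last |k| coordinates lie in I, the remaining sum is alternating in each of them,
   and by evenness of F a coordinate of block j sees F only through its gcd with x (rho_j v).
   For one such coordinate the alternating sum is a determinant det [h_v (x_j)] of Smith type: on a
   factor-closed set it factors as G * E, where E t j = [x_t dvd x_j] has determinant 1 and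
   G v t vanishes unless x_t divides x (rho v), so the determinant is
   sgn rho * prod_v (mu * h_v) (x (rho v)).  Peeling off the |k| coordinates one at a time yields
   prod_j sgn rho_j ^ k_j times the multiple Moebius transform of F at (r, ..., r); as
   c(q, 1) = mu q, this transform is prod_j r_j ^ k_j times the Fourier coefficient
   alpha_r (r, ..., r).  Over v the factors r_j ^ k_j multiply to (x_1 ... x_n) ^ |k|, and the
   signs sgn rho_j ^ (eps_j + k_j) are those of the hyperdeterminant with index set I~. *)

section \<open>Moebius inversion\<close>

lemma moebius_mu_eq_0_if_square_dvd:
  "prime p \<Longrightarrow> p * p dvd d \<Longrightarrow> moebius_mu d = 0"
  unfolding moebius_mu_def
  using squarefreeD[of d p] not_prime_unit[of p] by (auto simp: power2_eq_square)

lemma moebius_mu_prime_mult: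
  assumes p: "prime p" and "\<not> p dvd d" and "d > 0"
  shows "moebius_mu (p * d) = - moebius_mu d"
proof -
  have "coprime p d" using assms by (simp add: prime_imp_coprime)
  then have "squarefree (p * d) \<longleftrightarrow> squarefree d"
    using squarefree_mult_coprime squarefree_prime[OF p] squarefree_multD(2) by blast
  moreover have "prime_factors (p * d) = insert p (prime_factors d)"
    using assms by (simp add: prime_factors_product prime_prime_factors)
  moreover have "p \<notin> prime_factors d" using assms by auto
  ultimately show ?thesis using assms by (auto simp: moebius_mu_def)
qed

lemma divisors_prime_mult:
  fixes p m :: nat
  assumes p: "prime p"
  shows "{d. d dvd p * m} = {e. e dvd m \<and> \<not> p dvd e} \<union> (*) p ` {e. e dvd m}"
proof (intro equalityI subsetI)
  fix d assume "d \<in> {d. d dvd p * m}"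
  then have "d dvd p * m" by simp
  then show "d \<in> {e. e dvd m \<and> \<not> p dvd e} \<union> (*) p ` {e. e dvd m}"
  proof (cases "p dvd d")
    case False
    then have "coprime d p" using p by (metis prime_imp_coprime coprime_commute)
    then show ?thesis using \<open>d dvd p * m\<close> False by (simp add: coprime_dvd_mult_right_iff)
  next
    case True
    then obtain e where "d = p * e" by blast
    then have "e dvd m" using \<open>d dvd p * m\<close> p by (simp add: prime_gt_0_nat)
    then show ?thesis using \<open>d = p * e\<close> by blast
  qed
qed auto

lemma sum_moebius_mu_divisors:
  assumes "n > (0::nat)"
  shows "(\<Sum>d | d dvd n. moebius_mu d) = (if n = 1 then 1 else 0)"
proof (cases "n = 1")
  case False
  then obtain p m where p: "prime p" and n: "n = p * m"
    using assms prime_factor_nat by (metis dvdE)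
  have "m > 0" using n assms by simp
  have divisors: "{d. d dvd n} = {e. e dvd m \<and> \<not> p dvd e} \<union> (*) p ` {e. e dvd m}"
    using divisors_prime_mult[OF p] n by simp
  have multiples:
    "(\<Sum>e | e dvd m. moebius_mu (p * e)) = - (\<Sum>e | e dvd m \<and> \<not> p dvd e. moebius_mu e)"
  proof -
    have "moebius_mu (p * e) = (if \<not> p dvd e then - moebius_mu e else 0)" if "e dvd m" for e
      using that \<open>m > 0\<close> p moebius_mu_prime_mult[of p e] moebius_mu_eq_0_if_square_dvd[of p "p * e"]
      by (auto intro: Nat.gr0I)
    then have "(\<Sum>e | e dvd m. moebius_mu (p * e))
        = (\<Sum>e \<in> {e \<in> {e. e dvd m}. \<not> p dvd e}. - moebius_mu e)"
      using \<open>m > 0\<close> by (simp add: sum.inter_filter[of "{e. e dvd m}", symmetric])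
    then show ?thesis by (simp add: sum_negf)
  qed
  have "inj_on ((*) p) {e. e dvd m}" using p by (auto simp: inj_on_def prime_gt_0_nat)
  then have "(\<Sum>d | d dvd n. moebius_mu d)
      = (\<Sum>e | e dvd m \<and> \<not> p dvd e. moebius_mu e) + (\<Sum>e | e dvd m. moebius_mu (p * e))"
    unfolding divisors using \<open>m > 0\<close> by (subst sum.union_disjoint) (auto simp: sum.reindex)
  then show ?thesis using multiples False by simp
qed (simp add: moebius_mu_def)

definition moebius_transform :: "(nat \<Rightarrow> 'a::comm_ring_1) \<Rightarrow> nat \<Rightarrow> 'a" where
  "moebius_transform h r = (\<Sum>d | d dvd r. of_int (moebius_mu (r div d)) * h d)"

lemma sum_divisors_moebius_transform:
  assumes u: "u > 0"
  shows "(\<Sum>t | t dvd u. moebius_transform h t) = h u"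
proof -
  have inner: "(\<Sum>t | t dvd u \<and> d dvd t. of_int (moebius_mu (t div d)) :: 'a)
      = (if d = u then 1 else 0)"
    if d: "d dvd u" for d
  proof -
    obtain w where w: "u = d * w" using d by blast
    have "d > 0" "w > 0" using u w by auto
    have "{t. t dvd u \<and> d dvd t} = (*) d ` {e. e dvd w}"
      using w \<open>d > 0\<close> by (auto simp: image_iff)
    moreover have "inj_on ((*) d) {e. e dvd w}" using \<open>d > 0\<close> by (auto simp: inj_on_def)
    ultimately have "(\<Sum>t | t dvd u \<and> d dvd t. of_int (moebius_mu (t div d)) :: 'a)
        = of_int (\<Sum>e | e dvd w. moebius_mu e)"
      using \<open>d > 0\<close> by (simp add: sum.reindex)
    then show ?thesis using sum_moebius_mu_divisors[OF \<open>w > 0\<close>] w \<open>d > 0\<close> by auto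
  qed
  have "(\<Sum>t | t dvd u. moebius_transform h t)
      = (\<Sum>t | t dvd u. \<Sum>d | d dvd u \<and> d dvd t. of_int (moebius_mu (t div d)) * h d)"
    unfolding moebius_transform_def
    by (intro sum.cong refl arg_cong2[where f = sum]) (auto intro: dvd_trans)
  also have "\<dots> = (\<Sum>d | d dvd u. (\<Sum>t | t dvd u \<and> d dvd t. of_int (moebius_mu (t div d))) * h d)"
    using u sum.swap_restrict[of "{t. t dvd u}" "{d. d dvd u}" _ "\<lambda>t d. d dvd t"]
    by (simp add: sum_distrib_right)
  also have "\<dots> = (\<Sum>d | d dvd u. if d = u then h d else 0)"
    by (rule sum.cong) (simp_all add: inner)
  also have "\<dots> = h u"
    using u by simp
  finally show ?thesis .
qed

lemma ramanujan_sum_right_1: "ramanujan_sum q 1 = moebius_mu q"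
  by (simp add: ramanujan_sum_def)

section \<open>A determinant of Smith type\<close>

lemma permutes_eq_if_dvd:
  fixes x :: "nat \<Rightarrow> nat"
  assumes inj: "inj_on x {..<n}" and pos: "\<And>i. i < n \<Longrightarrow> x i > 0"
    and \<alpha>: "\<alpha> permutes {..<n}" and \<beta>: "\<beta> permutes {..<n}"
    and dvd: "\<And>v. v < n \<Longrightarrow> x (\<alpha> v) dvd x (\<beta> v)"
  shows "\<alpha> = \<beta>"
proof -
  have in_range: "\<alpha> v < n" "\<beta> v < n" if "v < n" for v
    using that permutes_in_image[OF \<alpha>] permutes_in_image[OF \<beta>] by auto
  have le: "x (\<alpha> v) \<le> x (\<beta> v)" if "v < n" for v
    using dvd[OF that] pos[OF in_range(2)[OF that]] by (rule dvd_imp_le)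
  have "(\<Sum>v<n. x (\<alpha> v)) = (\<Sum>v<n. x (\<beta> v))"
    using sum.permute[OF \<alpha>, of x] sum.permute[OF \<beta>, of x] by simp
  then have "x (\<alpha> v) = x (\<beta> v)" if "v < n" for v
    using le that sum_strict_mono_ex1[of "{..<n}" "\<lambda>v. x (\<alpha> v)" "\<lambda>v. x (\<beta> v)"]
    by (metis finite_lessThan lessThan_iff order_less_irrefl order.not_eq_order_implies_strict)
  then have "\<alpha> v = \<beta> v" if "v < n" for v
    using that in_range inj by (auto simp: inj_on_def)
  then show ?thesis
    using permutes_not_in[OF \<alpha>] permutes_not_in[OF \<beta>] by (metis lessThan_iff ext)
qed

lemma det_eq_single_perm:
  fixes A :: "nat \<Rightarrow> nat \<Rightarrow> 'a::comm_ring_1"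
  assumes \<rho>: "\<rho> permutes {..<n}"
    and zero: "\<And>p. p permutes {..<n} \<Longrightarrow> p \<noteq> \<rho> \<Longrightarrow> \<exists>i<n. A i (p i) = 0"
  shows "Determinant.det (Matrix.mat n n (\<lambda>(i, j). A i j)) = of_int (sign \<rho>) * (\<Prod>i<n. A i (\<rho> i))"
proof -
  have "Determinant.det (Matrix.mat n n (\<lambda>(i, j). A i j))
      = (\<Sum>p \<in> {p. p permutes {..<n}}. of_int (sign p) * (\<Prod>i<n. A i (p i)))"
    by (simp add: Determinant.det_def atLeast0LessThan)
  also have "\<dots> = (\<Sum>p \<in> {\<rho>}. of_int (sign p) * (\<Prod>i<n. A i (p i)))"
  proof (intro sum.mono_neutral_right)
    show "\<forall>p \<in> {p. p permutes {..<n}} - {\<rho>}. of_int (sign p) * (\<Prod>i<n. A i (p i)) = 0"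
    proof
      fix p assume "p \<in> {p. p permutes {..<n}} - {\<rho>}"
      then obtain i where "i < n" "A i (p i) = 0" using zero by blast
      then show "of_int (sign p) * (\<Prod>i<n. A i (p i)) = 0"
        by (metis finite_lessThan lessThan_iff mult_zero_right prod_zero)
    qed
  qed (use \<rho> in \<open>auto simp: finite_permutations\<close>)
  finally show ?thesis by simp
qed

lemma sum_moebius_transform_common_divisors:
  fixes x :: "nat \<Rightarrow> nat"
  assumes inj: "inj_on x {..<n}" and fc: "factor_closed (x ` {..<n})"
    and r: "r \<in> x ` {..<n}" "r > 0" and w: "w > 0" and even: "h (gcd w r) = h w"
  shows "(\<Sum>t<n. if x t dvd r \<and> x t dvd w then moebius_transform h (x t) else 0) = h w"
proof -
  have divisors: "{d. d dvd gcd w r} = x ` {t \<in> {..<n}. x t dvd r \<and> x t dvd w}"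
  proof (intro equalityI subsetI)
    fix d assume "d \<in> {d. d dvd gcd w r}"
    then have "d dvd r" "d dvd w" "d > 0" using w by (auto intro: Nat.gr0I)
    then show "d \<in> x ` {t \<in> {..<n}. x t dvd r \<and> x t dvd w}"
      using fc r unfolding factor_closed_def by blast
  qed auto
  have "h w = (\<Sum>d | d dvd gcd w r. moebius_transform h d)"
    using sum_divisors_moebius_transform[of "gcd w r" h] w even by simp
  also have "\<dots> = (\<Sum>t \<in> {t \<in> {..<n}. x t dvd r \<and> x t dvd w}. moebius_transform h (x t))"
    unfolding divisors using inj by (subst sum.reindex) (auto intro: inj_on_subset)
  also have "\<dots> = (\<Sum>t<n. if x t dvd r \<and> x t dvd w then moebius_transform h (x t) else 0)"
    by (rule sum.inter_filter) simp
  finally show ?thesis by simp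
qed

lemma sum_perms_gcd_dependent:
  fixes x :: "nat \<Rightarrow> nat" and h :: "nat \<Rightarrow> nat \<Rightarrow> 'a::comm_ring_1"
  assumes inj: "inj_on x {..<n}" and pos: "\<And>i. i < n \<Longrightarrow> x i > 0"
    and fc: "factor_closed (x ` {..<n})" and \<rho>: "\<rho> permutes {..<n}"
    and even: "\<And>v w. v < n \<Longrightarrow> w > 0 \<Longrightarrow> h v (gcd w (x (\<rho> v))) = h v w"
  shows "(\<Sum>\<pi> | \<pi> permutes {..<n}. of_int (sign \<pi>) * (\<Prod>v<n. h v (x (\<pi> v))))
       = of_int (sign \<rho>) * (\<Prod>v<n. moebius_transform (h v) (x (\<rho> v)))"
proof -
  have \<rho>_range: "\<rho> v < n" if "v < n" for v using that permutes_in_image[OF \<rho>] by simp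
  define G where "G = Matrix.mat n n
    (\<lambda>(v, t). if x t dvd x (\<rho> v) then moebius_transform (h v) (x t) else 0)"
  define E :: "'a mat" where "E = Matrix.mat n n (\<lambda>(t, j). if x t dvd x j then 1 else 0)"
  have factorization: "Matrix.mat n n (\<lambda>(v, j). h v (x j)) = G * E"
  proof (rule eq_matI)
    fix v j assume "v < dim_row (G * E)" "j < dim_col (G * E)"
    then have "v < n" "j < n" by (simp_all add: G_def E_def)
    then have "(G * E) $$ (v, j)
        = (\<Sum>t<n. if x t dvd x (\<rho> v) \<and> x t dvd x j then moebius_transform (h v) (x t) else 0)"
      by (auto simp: G_def E_def scalar_prod_def atLeast0LessThan intro!: sum.cong)
    also have "\<dots> = h v (x j)"
      using sum_moebius_transform_common_divisors[OF inj fc, of "x (\<rho> v)" "x j" "h v"]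
        \<open>v < n\<close> \<open>j < n\<close> pos \<rho>_range even by simp
    finally show "Matrix.mat n n (\<lambda>(v, j). h v (x j)) $$ (v, j) = (G * E) $$ (v, j)"
      using \<open>v < n\<close> \<open>j < n\<close> by simp
  qed (simp_all add: G_def E_def)
  have det_E: "Determinant.det E = 1"
    unfolding E_def
    by (subst det_eq_single_perm[OF permutes_id])
      (use permutes_eq_if_dvd[OF inj pos permutes_id] in \<open>fastforce simp: sign_id\<close>)+
  have det_G: "Determinant.det G = of_int (sign \<rho>) * (\<Prod>v<n. moebius_transform (h v) (x (\<rho> v)))"
    unfolding G_def
    by (subst det_eq_single_perm[OF \<rho>])
      (use permutes_eq_if_dvd[OF inj pos _ \<rho>] in \<open>fastforce\<close>)+
  have "(\<Sum>\<pi> | \<pi> permutes {..<n}. of_int (sign \<pi>) * (\<Prod>v<n. h v (x (\<pi> v))))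
      = Determinant.det (Matrix.mat n n (\<lambda>(v, j). h v (x j)))"
    by (simp add: Determinant.det_def atLeast0LessThan)
  also have "\<dots> = Determinant.det G * Determinant.det E"
    unfolding factorization by (rule det_mult[of _ n]) (simp_all add: G_def E_def)
  finally show ?thesis
    by (simp add: det_G det_E)
qed

lemma in_listset_iff: "xs \<in> listset As \<longleftrightarrow> list_all2 (\<in>) xs As"
  by (induction As arbitrary: xs) (auto simp: set_Cons_def list_all2_Cons2)

lemma length_in_listset: "xs \<in> listset As \<Longrightarrow> length xs = length As"
  by (simp add: in_listset_iff list_all2_lengthD)

lemma listset_replicate: "listset (replicate N A) = {xs. length xs = N \<and> set xs \<subseteq> A}"
  by (auto simp: in_listset_iff list_all2_conv_all_nth in_set_conv_nth) (use nth_mem in blast)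

lemma sum_listset_Cons:
  "(\<Sum>xs \<in> listset (A # As). f xs) = (\<Sum>a \<in> A. \<Sum>xs \<in> listset As. f (a # xs))"
proof -
  have "listset (A # As) = (\<lambda>(a, xs). a # xs) ` (A \<times> listset As)"
    by (auto simp: set_Cons_def)
  moreover have "inj_on (\<lambda>(a, xs). a # xs) (A \<times> listset As)"
    by (auto simp: inj_on_def)
  ultimately show ?thesis
    by (simp add: sum.reindex sum.cartesian_product case_prod_beta')
qed

lemma sum_listset_append:
  "(\<Sum>xs \<in> listset (As @ Bs). f xs) = (\<Sum>ys \<in> listset As. \<Sum>zs \<in> listset Bs. f (ys @ zs))"
  by (induction As arbitrary: f) (simp_all add: sum_listset_Cons del: listset.simps(2))

lemma sum_listset_concat:
  "(\<Sum>xs \<in> listset (concat Ass). f xs) = (\<Sum>xss \<in> listset (map listset Ass). f (concat xss))"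
  by (induction Ass arbitrary: f)
    (simp_all add: sum_listset_append sum_listset_Cons del: listset.simps(2))

lemma prod_list_map2_conv_nth:
  "length xs = length ys \<Longrightarrow> prod_list (map2 f xs ys) = (\<Prod>i<length xs. f (xs ! i) (ys ! i))"
  by (simp add: prod.list_conv_set_nth atLeast0LessThan)

lemma prod_list_map2_concat:
  "map length xss = map length yss \<Longrightarrow>
   prod_list (map2 f (concat xss) (concat yss))
   = prod_list (map2 (\<lambda>xs ys. prod_list (map2 f xs ys)) xss yss)"
  by (induction xss arbitrary: yss) (auto simp: Cons_eq_map_conv)

lemma prod_lessThan_add:
  fixes g :: "nat \<Rightarrow> 'a::comm_monoid_mult"
  shows "(\<Prod>j<m + s. g j) = (\<Prod>j<m. g j) * (\<Prod>i<s. g (m + i))"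
  by (induction s) (simp_all add: mult_ac)

lemma group_by_concat: "map length xss = k \<Longrightarrow> group_by k (concat xss) = xss"
  by (induction xss arbitrary: k) auto

lemma group_by_map2: "group_by k (map2 g xs ys) = map2 (map2 g) (group_by k xs) (group_by k ys)"
  by (induction k arbitrary: xs ys) (simp_all add: take_map drop_map take_zip drop_zip)

lemma shaped_group_by: "length xs = sum_list k \<Longrightarrow> shaped k (group_by k xs)"
  by (induction k arbitrary: xs) (auto simp: shaped_def nth_Cons split: nat.splits)

lemma set_group_by: "ys \<in> set (group_by k xs) \<Longrightarrow> set ys \<subseteq> set xs"
  by (induction k arbitrary: xs) (auto dest: in_set_takeD in_set_dropD)

definition replicate_blocks :: "'a list \<Rightarrow> nat list \<Rightarrow> 'a list list" where
  "replicate_blocks xs k = map2 (\<lambda>x kj. replicate kj x) xs k"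

lemma map_length_replicate_blocks:
  "length xs = length k \<Longrightarrow> map length (replicate_blocks xs k) = k"
  by (simp add: replicate_blocks_def list_eq_iff_nth_eq)

lemma map_replicate_blocks: "map (map f) (replicate_blocks xs k) = replicate_blocks (map f xs) k"
  by (simp add: replicate_blocks_def zip_map1 case_prod_beta)

lemma prod_list_concat_replicate_blocks:
  "length xs = length k \<Longrightarrow>
   prod_list (concat (replicate_blocks xs k)) = (\<Prod>j<length k. xs ! j ^ (k ! j))"
proof (induction k arbitrary: xs)
  case (Cons kj k)
  then obtain x xs' where "xs = x # xs'" by (cases xs) auto
  with Cons show ?case
    unfolding length_Cons prod.lessThan_Suc_shift by (simp add: replicate_blocks_def)
qed (simp add: replicate_blocks_def)

section \<open>Functions even in several coordinates\<close>

definition moebius_transform_list :: "(nat list \<Rightarrow> 'a::comm_ring_1) \<Rightarrow> nat list \<Rightarrow> 'a" where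
  "moebius_transform_list f rs =
     (\<Sum>ds \<in> listset (map (\<lambda>r. {d. d dvd r}) rs).
        of_int (prod_list (map2 (\<lambda>r d. moebius_mu (r div d)) rs ds)) * f ds)"

lemma moebius_transform_list_Nil [simp]: "moebius_transform_list f [] = f []"
  by (simp add: moebius_transform_list_def)

lemma moebius_transform_list_Cons:
  "moebius_transform_list f (r # rs)
   = moebius_transform_list (\<lambda>ds. moebius_transform (\<lambda>d. f (d # ds)) r) rs"
  unfolding moebius_transform_list_def moebius_transform_def sum_listset_Cons list.map
  by (subst sum.swap) (simp add: sum_distrib_left mult_ac)

definition even_mod_list :: "nat list \<Rightarrow> (nat list \<Rightarrow> 'a) \<Rightarrow> bool" where
  "even_mod_list rs f \<longleftrightarrow>
     (\<forall>ws. length ws = length rs \<and> (\<forall>w \<in> set ws. w > 0) \<longrightarrow> f (map2 gcd ws rs) = f ws)"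

lemma even_mod_list_Cons_head:
  assumes f: "even_mod_list (r # rs) f" and "w > 0"
    and ws: "length ws = length rs" "\<forall>w \<in> set ws. w > 0"
  shows "f (gcd w r # ws) = f (w # ws)"
proof -
  have ev: "f (map2 gcd (u # ws) (r # rs)) = f (u # ws)" if "u > 0" for u
    using f that ws unfolding even_mod_list_def
    by (metis (no_types, lifting) length_Cons set_ConsD)
  have "f (gcd w r # ws) = f (gcd w r # map2 gcd ws rs)"
    using ev[of "gcd w r"] \<open>w > 0\<close> by simp
  also have "\<dots> = f (w # ws)"
    using ev[of w] \<open>w > 0\<close> by simp
  finally show ?thesis .
qed

lemma even_mod_list_Cons_tail:
  assumes f: "even_mod_list (r # rs) f" and "d dvd r" "d > 0"
  shows "even_mod_list rs (\<lambda>ws. f (d # ws))"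
  unfolding even_mod_list_def
proof (intro allI impI)
  fix ws :: "nat list" assume "length ws = length rs \<and> (\<forall>w\<in>set ws. w > 0)"
  then have "f (map2 gcd (d # ws) (r # rs)) = f (d # ws)"
    using f \<open>d > 0\<close> unfolding even_mod_list_def by (metis length_Cons set_ConsD)
  then show "f (d # map2 gcd ws rs) = f (d # ws)"
    using \<open>d dvd r\<close> by (simp add: gcd_nat.absorb1)
qed

lemma even_mod_list_moebius_transform_head:
  assumes "even_mod_list (r # rs) f" and "r > 0"
  shows "even_mod_list rs (\<lambda>ws. moebius_transform (\<lambda>d. f (d # ws)) r)"
proof -
  have "even_mod_list rs (\<lambda>ws. f (d # ws))" if "d dvd r" for d
    using even_mod_list_Cons_tail[OF assms(1) that] that \<open>r > 0\<close> dvd_pos_nat by blast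
  then show ?thesis
    unfolding even_mod_list_def moebius_transform_def by (auto intro!: sum.cong)
qed

lemma sum_perm_lists_gcd_dependent:
  fixes x :: "nat \<Rightarrow> nat" and f :: "nat \<Rightarrow> nat list \<Rightarrow> 'a::comm_ring_1"
  assumes inj: "inj_on x {..<n}" and pos: "\<And>i. i < n \<Longrightarrow> x i > 0"
    and fc: "factor_closed (x ` {..<n})"
    and as: "set as \<subseteq> {\<pi>. \<pi> permutes {..<n}}"
    and even: "\<And>v. v < n \<Longrightarrow> even_mod_list (map (\<lambda>a. x (a v)) as) (f v)"
  shows "(\<Sum>\<pi>s \<in> listset (replicate (length as) {\<pi>. \<pi> permutes {..<n}}).
            of_int (prod_list (map sign \<pi>s)) * (\<Prod>v<n. f v (map (\<lambda>\<pi>. x (\<pi> v)) \<pi>s)))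
       = of_int (prod_list (map sign as))
         * (\<Prod>v<n. moebius_transform_list (f v) (map (\<lambda>a. x (a v)) as))"
  using as even
proof (induction as arbitrary: f)
  case Nil
  then show ?case by simp
next
  case (Cons a as)
  let ?Perms = "{\<pi>. \<pi> permutes {..<n}}"
  have a: "a permutes {..<n}" using Cons.prems by simp
  have a_pos: "x (a v) > 0" if "v < n" for v
    using pos permutes_in_image[OF a] that by simp
  define f' where "f' v ws = moebius_transform (\<lambda>d. f v (d # ws)) (x (a v))" for v ws
  have even': "even_mod_list (map (\<lambda>a. x (a v)) as) (f' v)" if "v < n" for v
    unfolding f'_def using Cons.prems(2)[OF that] a_pos[OF that]
    by (intro even_mod_list_moebius_transform_head) simp_all
  have first_coordinate:
    "(\<Sum>\<pi> \<in> ?Perms. of_int (sign \<pi>) * (\<Prod>v<n. f v (x (\<pi> v) # map (\<lambda>\<pi>. x (\<pi> v)) \<pi>s)))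
       = of_int (sign a) * (\<Prod>v<n. f' v (map (\<lambda>\<pi>. x (\<pi> v)) \<pi>s))"
    if \<pi>s: "\<pi>s \<in> listset (replicate (length as) ?Perms)" for \<pi>s
    unfolding f'_def
  proof (rule sum_perms_gcd_dependent[OF inj pos fc a])
    fix v w :: nat assume "v < n" "w > 0"
    have "\<pi> v < n" if "\<pi> \<in> set \<pi>s" for \<pi>
      using \<pi>s that \<open>v < n\<close> permutes_in_image by (fastforce simp: listset_replicate)
    then have "\<forall>w \<in> set (map (\<lambda>\<pi>. x (\<pi> v)) \<pi>s). w > 0" using pos by auto
    then show "f v (gcd w (x (a v)) # map (\<lambda>\<pi>. x (\<pi> v)) \<pi>s) = f v (w # map (\<lambda>\<pi>. x (\<pi> v)) \<pi>s)"
      using even_mod_list_Cons_head[OF Cons.prems(2)[OF \<open>v < n\<close>, simplified] \<open>w > 0\<close>] \<pi>s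
      by (simp add: listset_replicate)
  qed
  have "(\<Sum>\<pi>s \<in> listset (replicate (length (a # as)) ?Perms).
          of_int (prod_list (map sign \<pi>s)) * (\<Prod>v<n. f v (map (\<lambda>\<pi>. x (\<pi> v)) \<pi>s)))
      = (\<Sum>\<pi>s \<in> listset (replicate (length as) ?Perms). of_int (prod_list (map sign \<pi>s)) *
          (\<Sum>\<pi> \<in> ?Perms. of_int (sign \<pi>) * (\<Prod>v<n. f v (x (\<pi> v) # map (\<lambda>\<pi>. x (\<pi> v)) \<pi>s))))"
    by (simp add: sum_listset_Cons sum_distrib_left mult_ac del: listset.simps(2))
      (rule sum.swap)
  also have "\<dots> = of_int (sign a) * (\<Sum>\<pi>s \<in> listset (replicate (length as) ?Perms).
          of_int (prod_list (map sign \<pi>s)) * (\<Prod>v<n. f' v (map (\<lambda>\<pi>. x (\<pi> v)) \<pi>s)))"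
    by (simp add: first_coordinate sum_distrib_left mult_ac)
  also have "\<dots> = of_int (prod_list (map sign (a # as)))
      * (\<Prod>v<n. moebius_transform_list (f v) (map (\<lambda>a. x (a v)) (a # as)))"
    using Cons.IH[of f', OF _ even'] Cons.prems(1)
    by (simp add: moebius_transform_list_Cons f'_def[abs_def])
  finally show ?case .
qed

lemma even_mod_list_group_by:
  assumes ev: "even_mod k F" and r: "length r = length k" "\<forall>a \<in> set r. a > 0"
  shows "even_mod_list (concat (replicate_blocks r k)) (\<lambda>ws. F r (group_by k ws))"
  unfolding even_mod_list_def
proof (intro allI impI)
  fix ws :: "nat list"
  assume ws: "length ws = length (concat (replicate_blocks r k)) \<and> (\<forall>w \<in> set ws. w > 0)"
  then have len: "length ws = sum_list k"
    using r by (simp add: length_concat map_length_replicate_blocks)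
  have "group_by k (map2 gcd ws (concat (replicate_blocks r k)))
      = map2 (map2 gcd) (group_by k ws) (replicate_blocks r k)"
    using r by (simp add: group_by_map2 group_by_concat map_length_replicate_blocks)
  also have "\<dots> = map2 (\<lambda>rj nj. map (\<lambda>a. gcd a rj) nj) r (group_by k ws)"
    using shaped_group_by[OF len] r
    by (auto simp: list_eq_iff_nth_eq shaped_def replicate_blocks_def zip_replicate2)
  finally have regroup: "group_by k (map2 gcd ws (concat (replicate_blocks r k)))
      = map2 (\<lambda>rj nj. map (\<lambda>a. gcd a rj) nj) r (group_by k ws)" .
  have "\<forall>g \<in> set (group_by k ws). \<forall>a \<in> set g. a > 0"
    using ws set_group_by[of _ k ws] by blast
  then show "F r (group_by k (map2 gcd ws (concat (replicate_blocks r k)))) = F r (group_by k ws)"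
    unfolding regroup using ev r shaped_group_by[OF len] unfolding even_mod_def by blast
qed

lemma moebius_transform_list_group_by:
  fixes F :: "nat list \<Rightarrow> nat list list \<Rightarrow> complex"
  assumes r: "length r = length k" "\<forall>a \<in> set r. a > 0"
  shows "moebius_transform_list (\<lambda>ws. F r (group_by k ws)) (concat (replicate_blocks r k))
       = of_nat (\<Prod>j<length k. r ! j ^ (k ! j)) * fourier_coeff k F r (replicate_blocks r k)"
proof -
  let ?S = "{\<delta>s. shaped k \<delta>s \<and> (\<forall>j<length k. \<forall>l<k ! j. \<delta>s ! j ! l dvd r ! j)}"
  let ?\<mu> = "\<lambda>r d. moebius_mu (r div d)"
  have S: "listset (map listset (map (map (\<lambda>r. {d. d dvd r})) (replicate_blocks r k))) = ?S"
    using r by (auto simp: in_listset_iff list_all2_conv_all_nth shaped_def replicate_blocks_def)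
      (metis mem_Collect_eq nth_replicate)
  have weight: "prod_list (map2 ?\<mu> (concat (replicate_blocks r k)) (concat \<delta>s))
      = (\<Prod>j<length k. \<Prod>l<k ! j. ?\<mu> (r ! j) (\<delta>s ! j ! l))" if "\<delta>s \<in> ?S" for \<delta>s
  proof -
    have lengths: "map length (replicate_blocks r k) = map length \<delta>s"
      using that r by (simp add: map_length_replicate_blocks shaped_def list_eq_iff_nth_eq)
    have "prod_list (map2 ?\<mu> (concat (replicate_blocks r k)) (concat \<delta>s))
        = prod_list (map2 (\<lambda>xs ys. prod_list (map2 ?\<mu> xs ys)) (replicate_blocks r k) \<delta>s)"
      using lengths by (rule prod_list_map2_concat)
    also have "\<dots> = (\<Prod>j<length k. \<Prod>l<k ! j. ?\<mu> (r ! j) (\<delta>s ! j ! l))"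
      using that r by (simp add: prod_list_map2_conv_nth replicate_blocks_def shaped_def)
    finally show ?thesis .
  qed
  have "moebius_transform_list (\<lambda>ws. F r (group_by k ws)) (concat (replicate_blocks r k))
      = (\<Sum>\<delta>s \<in> ?S. of_int (prod_list (map2 ?\<mu> (concat (replicate_blocks r k)) (concat \<delta>s)))
           * F r (group_by k (concat \<delta>s)))"
    unfolding moebius_transform_list_def map_concat sum_listset_concat S ..
  also have "\<dots> = (\<Sum>\<delta>s \<in> ?S. F r \<delta>s * of_int (\<Prod>j<length k. \<Prod>l<k ! j. ?\<mu> (r ! j) (\<delta>s ! j ! l)))"
    by (intro sum.cong refl)
      (simp add: weight group_by_concat shaped_def list_eq_iff_nth_eq)
  also have "\<dots> = of_nat (\<Prod>j<length k. r ! j ^ (k ! j)) * fourier_coeff k F r (replicate_blocks r k)"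
    using r by (simp add: fourier_coeff_def ramanujan_sum_right_1[unfolded One_nat_def]
        replicate_blocks_def prod_zero_iff)
  finally show ?thesis .
qed

lemma prod_perm_powers:
  fixes x :: "nat \<Rightarrow> nat"
  assumes "length \<rho>s = length k" "set \<rho>s \<subseteq> {\<pi>. \<pi> permutes {..<n}}"
  shows "(\<Prod>v<n. \<Prod>j<length k. x ((\<rho>s ! j) v) ^ (k ! j)) = (\<Prod>i<n. x i) ^ sum_list k"
proof -
  have "(\<Prod>v<n. \<Prod>j<length k. x ((\<rho>s ! j) v) ^ (k ! j))
      = (\<Prod>j<length k. (\<Prod>v<n. x ((\<rho>s ! j) v)) ^ (k ! j))"
    by (subst prod.swap) (simp add: prod_power_distrib)
  also have "\<dots> = (\<Prod>j<length k. (\<Prod>i<n. x i) ^ (k ! j))"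
  proof (intro prod.cong refl)
    fix j assume "j \<in> {..<length k}"
    then have "\<rho>s ! j permutes {..<n}"
      using assms by (metis lessThan_iff mem_Collect_eq nth_mem subsetD)
    then show "(\<Prod>v<n. x ((\<rho>s ! j) v)) ^ (k ! j) = (\<Prod>i<n. x i) ^ (k ! j)"
      using prod.permute[of "\<rho>s ! j" "{..<n}" x] by (simp add: o_def)
  qed
  also have "\<dots> = (\<Prod>i<n. x i) ^ sum_list k"
    by (simp add: power_sum[symmetric] sum_list_sum_nth atLeast0LessThan)
  finally show ?thesis .
qed

lemma sum_perm_lists_even_mod:
  fixes x :: "nat \<Rightarrow> nat" and F :: "nat list \<Rightarrow> nat list list \<Rightarrow> complex"
  assumes inj: "inj_on x {..<n}" and pos: "\<And>i. i < n \<Longrightarrow> x i > 0"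
    and fc: "factor_closed (x ` {..<n})" and ev: "even_mod k F"
    and \<rho>s: "length \<rho>s = length k" "set \<rho>s \<subseteq> {\<pi>. \<pi> permutes {..<n}}"
  shows "(\<Sum>\<pi>s \<in> listset (replicate (sum_list k) {\<pi>. \<pi> permutes {..<n}}).
            of_int (prod_list (map sign \<pi>s))
            * (\<Prod>v<n. F (map (\<lambda>\<rho>. x (\<rho> v)) \<rho>s) (group_by k (map (\<lambda>\<pi>. x (\<pi> v)) \<pi>s))))
       = of_int (\<Prod>j<length k. sign (\<rho>s ! j) ^ (k ! j)) * of_nat (\<Prod>i<n. x i) ^ sum_list k
         * (\<Prod>v<n. fourier_coeff k F (map (\<lambda>\<rho>. x (\<rho> v)) \<rho>s)
                      (replicate_blocks (map (\<lambda>\<rho>. x (\<rho> v)) \<rho>s) k))"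
proof -
  define as where "as = concat (replicate_blocks \<rho>s k)"
  define r where "r v = map (\<lambda>\<rho>. x (\<rho> v)) \<rho>s" for v
  have len_as: "length as = sum_list k"
    using \<rho>s by (simp add: as_def length_concat map_length_replicate_blocks)
  have set_as: "set as \<subseteq> {\<pi>. \<pi> permutes {..<n}}"
    using \<rho>s by (auto simp: as_def replicate_blocks_def dest: set_zip_leftD)
  have r: "length (r v) = length k" "\<forall>a \<in> set (r v). a > 0" if "v < n" for v
    using \<rho>s that pos permutes_in_image by (fastforce simp: r_def)+
  have as_v: "map (\<lambda>a. x (a v)) as = concat (replicate_blocks (r v) k)" for v
    by (simp add: as_def map_concat map_replicate_blocks r_def)
  have "(\<Sum>\<pi>s \<in> listset (replicate (sum_list k) {\<pi>. \<pi> permutes {..<n}}).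
            of_int (prod_list (map sign \<pi>s)) * (\<Prod>v<n. F (r v) (group_by k (map (\<lambda>\<pi>. x (\<pi> v)) \<pi>s))))
      = of_int (prod_list (map sign as))
        * (\<Prod>v<n. moebius_transform_list (\<lambda>ws. F (r v) (group_by k ws))
                    (concat (replicate_blocks (r v) k)))"
    using sum_perm_lists_gcd_dependent[OF inj pos fc set_as, of "\<lambda>v ws. F (r v) (group_by k ws)"]
      even_mod_list_group_by[OF ev r] by (simp add: len_as as_v)
  also have "\<dots> = of_int (prod_list (map sign as))
        * (\<Prod>v<n. of_nat (\<Prod>j<length k. r v ! j ^ (k ! j))
                    * fourier_coeff k F (r v) (replicate_blocks (r v) k))"
    using moebius_transform_list_group_by[OF r] by simp
  also have "\<dots> = of_int (\<Prod>j<length k. sign (\<rho>s ! j) ^ (k ! j)) * of_nat (\<Prod>i<n. x i) ^ sum_list k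
         * (\<Prod>v<n. fourier_coeff k F (r v) (replicate_blocks (r v) k))"
  proof -
    have "prod_list (map sign as) = (\<Prod>j<length k. sign (\<rho>s ! j) ^ (k ! j))"
      using \<rho>s prod_list_concat_replicate_blocks[of "map sign \<rho>s" k]
      by (simp add: as_def map_concat map_replicate_blocks)
    moreover have "(\<Prod>v<n. \<Prod>j<length k. r v ! j ^ (k ! j)) = (\<Prod>i<n. x i) ^ sum_list k"
      using prod_perm_powers[OF \<rho>s, of x] \<rho>s by (simp add: r_def)
    ultimately show ?thesis
      by (simp add: prod.distrib flip: of_nat_prod)
  qed
  finally show ?thesis by (simp add: r_def)
qed

section \<open>Hyperdeterminants\<close>

lemma hyperdet_listset:
  "hyperdet K n J A = 1 / of_nat (fact n) *
     (\<Sum>\<sigma>s \<in> listset (replicate K {\<sigma>. \<sigma> permutes {..<n}}).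
        (\<Prod>j<K. if j \<in> J then of_int (sign (\<sigma>s ! j)) else 1) * (\<Prod>v<n. A (map (\<lambda>\<sigma>. \<sigma> v) \<sigma>s)))"
proof -
  have "listset (replicate K {\<sigma>. \<sigma> permutes {..<n}})
      = {\<sigma>s. length \<sigma>s = K \<and> (\<forall>\<sigma>\<in>set \<sigma>s. \<sigma> permutes {..<n})}"
    by (auto simp: listset_replicate)
  then show ?thesis unfolding hyperdet_def by simp
qed

lemma hyperdet_add_signed_dims:
  assumes J: "{m..<m + s} \<subseteq> J"
  shows "hyperdet (m + s) n J A = 1 / of_nat (fact n) *
     (\<Sum>\<rho>s \<in> listset (replicate m {\<sigma>. \<sigma> permutes {..<n}}).
        (\<Prod>j<m. if j \<in> J then of_int (sign (\<rho>s ! j)) else 1) *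
        (\<Sum>\<pi>s \<in> listset (replicate s {\<sigma>. \<sigma> permutes {..<n}}).
           of_int (prod_list (map sign \<pi>s)) * (\<Prod>v<n. A (map (\<lambda>\<sigma>. \<sigma> v) \<rho>s @ map (\<lambda>\<sigma>. \<sigma> v) \<pi>s))))"
proof -
  have signs: "(\<Prod>j<m + s. if j \<in> J then of_int (sign ((\<rho>s @ \<pi>s) ! j)) else 1)
      = (\<Prod>j<m. if j \<in> J then of_int (sign (\<rho>s ! j)) else 1)
        * (of_int (prod_list (map sign \<pi>s)) :: complex)"
    if "length \<rho>s = m" "length \<pi>s = s" for \<rho>s \<pi>s
  proof -
    have "(\<Prod>i<s. if m + i \<in> J then of_int (sign ((\<rho>s @ \<pi>s) ! (m + i))) else 1)
        = (\<Prod>i<s. of_int (sign (\<pi>s ! i)) :: complex)"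
      using that J by (intro prod.cong) (auto simp: nth_append subset_iff)
    moreover have "(\<Prod>j<m. if j \<in> J then of_int (sign ((\<rho>s @ \<pi>s) ! j)) else 1)
        = (\<Prod>j<m. if j \<in> J then of_int (sign (\<rho>s ! j)) else 1 :: complex)"
      using that by (intro prod.cong) (auto simp: nth_append)
    ultimately show ?thesis
      unfolding prod_lessThan_add using that by (simp add: prod.list_conv_set_nth atLeast0LessThan)
  qed
  show ?thesis
    unfolding hyperdet_listset replicate_add sum_listset_append sum_distrib_left
    by (intro arg_cong[where f = "(*) _"] sum.cong refl)
      (simp add: signs length_in_listset mult.assoc)
qed

lemma sign_power_combine:
  "(if b then of_int (sign p) else 1) * of_int (sign p) ^ k
   = (if odd ((if b then 1 else 0) + k) then of_int (sign p) else (1 :: 'a::comm_ring_1))"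
  by (cases "evenperm p") (auto simp: sign_def)

theorem proposition4p4:
  fixes x :: "nat \<Rightarrow> nat" and n :: nat and k :: "nat list"
    and F :: "nat list \<Rightarrow> nat list list \<Rightarrow> complex" and I :: "nat set"
  assumes inj: "inj_on x {..<n}"
    and pos: "\<forall>i<n. x i > 0"
    and fc: "factor_closed (x ` {..<n})"
    and m_pos: "length k \<ge> 1"
    and k_pos: "\<forall>j\<in>set k. j \<ge> 1"
    and ev: "even_mod k F"
    and I_sub: "I \<subseteq> {..<length k + sum_list k}"
    and I_even: "even (card I)"
    and I_sup: "{length k..<length k + sum_list k} \<subseteq> I"
  shows "hyperdet (length k + sum_list k) n I
           (\<lambda>idx. F (map x (take (length k) idx)) (group_by k (map x (drop (length k) idx))))
         = of_nat (\<Prod>i<n. x i) ^ sum_list k *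
           hyperdet (length k) n {j. j < length k \<and> odd ((if j \<in> I then 1 else 0) + k ! j)}
           (\<lambda>idx. fourier_coeff k F (map x idx) (map2 (\<lambda>i kj. replicate kj (x i)) idx k))"
proof -
  let ?Perms = "{\<sigma>. \<sigma> permutes {..<n}}"
  let ?P = "of_nat (\<Prod>i<n. x i) ^ sum_list k :: complex"
  let ?It = "{j. j < length k \<and> odd ((if j \<in> I then 1 else 0) + k ! j)}"
  let ?FC = "\<lambda>idx. fourier_coeff k F (map x idx) (map2 (\<lambda>i kj. replicate kj (x i)) idx k)"
  let ?sgn = "\<lambda>J \<rho>s. \<Prod>j<length k. if j \<in> J then of_int (sign (\<rho>s ! j)) else 1 :: complex"
  have signs: "?sgn I \<rho>s * of_int (\<Prod>j<length k. sign (\<rho>s ! j) ^ (k ! j)) = ?sgn ?It \<rho>s" for \<rho>s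
    by (simp add: prod.distrib[symmetric] sign_power_combine)
  have coeffs: "fourier_coeff k F (map (\<lambda>\<rho>. x (\<rho> v)) \<rho>s) (replicate_blocks (map (\<lambda>\<rho>. x (\<rho> v)) \<rho>s) k)
      = ?FC (map (\<lambda>\<sigma>. \<sigma> v) \<rho>s)" for \<rho>s v
    by (simp add: replicate_blocks_def zip_map1 o_def case_prod_beta)
  have "hyperdet (length k + sum_list k) n I
           (\<lambda>idx. F (map x (take (length k) idx)) (group_by k (map x (drop (length k) idx))))
      = 1 / of_nat (fact n) * (\<Sum>\<rho>s \<in> listset (replicate (length k) ?Perms).
          ?sgn I \<rho>s * (of_int (\<Prod>j<length k. sign (\<rho>s ! j) ^ (k ! j)) * ?P
           * (\<Prod>v<n. ?FC (map (\<lambda>\<sigma>. \<sigma> v) \<rho>s))))"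
    unfolding hyperdet_add_signed_dims[OF I_sup] coeffs[symmetric]
    using sum_perm_lists_even_mod[OF inj _ fc ev] pos
    by (intro arg_cong[where f = "(*) _"] sum.cong refl)
      (auto simp: length_in_listset listset_replicate o_def)
  also have "\<dots> = 1 / of_nat (fact n) * (\<Sum>\<rho>s \<in> listset (replicate (length k) ?Perms).
          ?P * ((?sgn I \<rho>s * of_int (\<Prod>j<length k. sign (\<rho>s ! j) ^ (k ! j)))
           * (\<Prod>v<n. ?FC (map (\<lambda>\<sigma>. \<sigma> v) \<rho>s))))"
    by (simp only: mult_ac)
  also have "\<dots> = ?P * hyperdet (length k) n ?It ?FC"
    unfolding signs hyperdet_listset sum_distrib_left by (simp only: mult_ac)
  finally show ?thesis .
qed

end
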